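(* Let $(X,d,A)$ be a metric pair such that $A$ is not isolated, and let $p\in[1,\infty]$. Then no persistence diagram in $(D(X,A),W_p)$ has a compact neighborhood. Hence $(D(X,A),W_p)$ is not locally compact, and every compact subset of $(D(X,A),W_p)$ has empty interior.
   Context: A metric on $X$ is a map $d:X\times X\to[0,\infty]$ with $d(x,x)=0$, symmetry and the triangle inequality (infinite distances allowed, $d(x,y)=0$ need not imply $x=y$); a metric pair $(X,d,A)$ is such a space with a closed subset $A$. Write $d(x,A)=\inf_{a\in A}d(x,a)$ and $A^\delta=\{x:d(x,A)<\delta\}$. $A$ is isolated if there is $\delta>0$ with $A^\delta=A$. $D(X,A)$ is the set of finite formal sums $\sum_i x_i$ of points of $X\setminus A$ (repetitions allowed), whose elements are called persistence diagrams. A matching of $\hat\alpha=\sum_{i\in I}x_i$, $\hat\beta=\sum_{j\in J}y_j$ is a formal sum $\sum_{k\in K}(x_k,y_{\varphi(k)})+\sum_{i\in I\setminus K}(x_i,z_i)+\sum_{j\in J\setminus\varphi(K)}(w_j,y_j)$ with $K\subset I$, $\varphi$ injective, $z_i,w_j\in A$; its $p$-cost is the $\ell^p$ norm (sup norm if $p=\infty$) of the distances of paired points; $W_p$ is the infimum of $p$-costs. The topology is the metric topology of $W_p$. *)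

theory Defs
  imports "HOL-Analysis.Analysis" "HOL-Library.Multiset"
begin

text \<open>Extended pseudometrics: values in [0,\<infinity>] (ennreal), zero on the diagonal,
  symmetric, triangle inequality. Distinct points may have distance 0.\<close>
definition ext_metric :: "('a \<Rightarrow> 'a \<Rightarrow> ennreal) \<Rightarrow> bool" where
  "ext_metric d \<longleftrightarrow> (\<forall>x. d x x = 0) \<and> (\<forall>x y. d x y = d y x)
      \<and> (\<forall>x y z. d x z \<le> d x y + d y z)"

definition setdist_e :: "('a \<Rightarrow> 'a \<Rightarrow> ennreal) \<Rightarrow> 'a \<Rightarrow> 'a set \<Rightarrow> ennreal" where
  "setdist_e d x A = (INF a\<in>A. d x a)"

definition closed_e :: "('a \<Rightarrow> 'a \<Rightarrow> ennreal) \<Rightarrow> 'a set \<Rightarrow> bool" where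
  "closed_e d A \<longleftrightarrow> (\<forall>x. setdist_e d x A = 0 \<longrightarrow> x \<in> A)"

definition thickening :: "('a \<Rightarrow> 'a \<Rightarrow> ennreal) \<Rightarrow> 'a set \<Rightarrow> ennreal \<Rightarrow> 'a set" where
  "thickening d A \<delta> = {x. setdist_e d x A < \<delta>}"

definition isolated_set :: "('a \<Rightarrow> 'a \<Rightarrow> ennreal) \<Rightarrow> 'a set \<Rightarrow> bool" where
  "isolated_set d A \<longleftrightarrow> (\<exists>\<delta>>0. thickening d A \<delta> = A)"

text \<open>Persistence diagrams: finite formal sums (multisets) of points of X - A.\<close>
definition diagrams :: "'a set \<Rightarrow> 'a multiset set" where
  "diagrams A = {\<alpha>. set_mset \<alpha> \<subseteq> - A}"

text \<open>A matching of \<alpha> and \<beta>: a formal sum of pairs, each pair either matches a point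
  of \<alpha> with a point of \<beta>, or a point of \<alpha> with a point of A, or a point of A with
  a point of \<beta>; every point of \<alpha> (resp. \<beta>) used exactly with its multiplicity.\<close>
definition matching :: "'a set \<Rightarrow> 'a multiset \<Rightarrow> 'a multiset \<Rightarrow> ('a \<times> 'a) multiset \<Rightarrow> bool" where
  "matching A \<alpha> \<beta> M \<longleftrightarrow>
     (\<forall>(x,y)\<in>#M. \<not> (x \<in> A \<and> y \<in> A)) \<and>
     image_mset fst (filter_mset (\<lambda>(x,y). x \<notin> A) M) = \<alpha> \<and>
     image_mset snd (filter_mset (\<lambda>(x,y). y \<notin> A) M) = \<beta>"

definition match_cost :: "('a \<Rightarrow> 'a \<Rightarrow> ennreal) \<Rightarrow> ennreal \<Rightarrow> ('a \<times> 'a) multiset \<Rightarrow> ennreal" where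
  "match_cost d p M =
     (if p = \<infinity> then (SUP (x,y)\<in>set_mset M. d x y)
      else if (\<exists>(x,y)\<in>#M. d x y = \<infinity>) then \<infinity>
      else ennreal ((\<Sum>(x,y)\<in>#M. (enn2real (d x y)) powr (enn2real p)) powr (1 / enn2real p)))"

definition wasserstein :: "('a \<Rightarrow> 'a \<Rightarrow> ennreal) \<Rightarrow> 'a set \<Rightarrow> ennreal \<Rightarrow> 'a multiset \<Rightarrow> 'a multiset \<Rightarrow> ennreal" where
  "wasserstein d A p \<alpha> \<beta> = (INF M\<in>{M. matching A \<alpha> \<beta> M}. match_cost d p M)"

definition emetric_open :: "'b set \<Rightarrow> ('b \<Rightarrow> 'b \<Rightarrow> ennreal) \<Rightarrow> 'b set \<Rightarrow> bool" where
  "emetric_open S e U \<longleftrightarrow> U \<subseteq> S \<and> (\<forall>x\<in>U. \<exists>r>0. {y\<in>S. e x y < r} \<subseteq> U)"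

lemma istopology_emetric_open: "istopology (emetric_open S e)"
proof -
  have 1: "emetric_open S e (U \<inter> V)" if HU: "emetric_open S e U" and HV: "emetric_open S e V" for U V
    unfolding emetric_open_def
  proof (intro conjI ballI)
    show "U \<inter> V \<subseteq> S" using HU unfolding emetric_open_def by blast
    fix x assume "x \<in> U \<inter> V"
    then obtain r1 r2 where "r1 > 0" "r2 > 0" "{y \<in> S. e x y < r1} \<subseteq> U" "{y \<in> S. e x y < r2} \<subseteq> V"
      using HU HV unfolding emetric_open_def by blast
    then show "\<exists>r>0. {y \<in> S. e x y < r} \<subseteq> U \<inter> V"
      by (intro exI[of _ "min r1 r2"]) auto
  qed
  have 2: "emetric_open S e (\<Union>K)" if H: "\<forall>U\<in>K. emetric_open S e U" for K
    unfolding emetric_open_def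
  proof (intro conjI ballI)
    show "\<Union> K \<subseteq> S" using H unfolding emetric_open_def by blast
    fix x assume "x \<in> \<Union> K"
    then obtain U where "U \<in> K" "x \<in> U" by blast
    with H obtain r where "r > 0" "{y \<in> S. e x y < r} \<subseteq> U" unfolding emetric_open_def by blast
    with \<open>U \<in> K\<close> show "\<exists>r>0. {y \<in> S. e x y < r} \<subseteq> \<Union> K" by blast
  qed
  show ?thesis unfolding istopology_def using 1 2 by blast
qed

definition emetric_topology :: "'b set \<Rightarrow> ('b \<Rightarrow> 'b \<Rightarrow> ennreal) \<Rightarrow> 'b topology" where
  "emetric_topology S e = topology (emetric_open S e)"

lemma openin_emetric_topology: "openin (emetric_topology S e) = emetric_open S e"
  unfolding emetric_topology_def using istopology_emetric_open topology_inverse' by blast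

definition Wp_topology :: "('a \<Rightarrow> 'a \<Rightarrow> ennreal) \<Rightarrow> 'a set \<Rightarrow> ennreal \<Rightarrow> 'a multiset topology" where
  "Wp_topology d A p = emetric_topology (diagrams A) (wasserstein d A p)"

end

theory Submission
  imports Defs
begin

text \<open>
  Let \<open>K\<close> be compact and contain the \<open>W\<^sub>p\<close>-ball of radius \<open>\<rho>\<close> around a diagram \<open>\<alpha>\<close>.
  As \<open>A\<close> is not isolated, there are points \<open>x \<notin> A\<close> with \<open>\<delta> = d(x, A) > 0\<close> arbitrarily
  small, and adding \<open>m\<close> copies of \<open>x\<close> to \<open>\<alpha>\<close> stays inside the ball for every \<open>m\<close> if
  \<open>p = \<infinity>\<close>, and for \<open>m\<close> up to about \<open>(\<rho>/2\<delta>)\<^sup>p\<close> if \<open>p < \<infinity>\<close>.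
  Sums over \<open>y \<in> \<gamma>\<close> of \<open>h(min(d(y,A), t))\<close> are upper semicontinuous in \<open>\<gamma>\<close> for suitable \<open>h\<close>,
  so compactness of \<open>K\<close> gives uniform bounds on \<open>K\<close> that these diagrams violate.
  For \<open>p = \<infinity>\<close> take \<open>h(s) = max 0 (s - t/2)\<close> with \<open>t = \<delta>\<close>: it is bounded on \<open>K\<close> but
  grows by \<open>\<delta>/2\<close> with each copy of \<open>x\<close>. For \<open>p < \<infinity>\<close> take \<open>h(s) = s\<^sup>p\<close>: these sums decrease
  to \<open>0\<close> as \<open>t \<rightarrow> 0\<close>, hence are uniformly below \<open>\<rho>\<^sup>p / 2\<^sup>p\<^sup>+\<^sup>1\<close> on \<open>K\<close> for some \<open>t\<close>,
  while for \<open>\<delta> < t\<close> the copies of \<open>x\<close> contribute at least that much.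
\<close>

lemma powr_increment_le:
  fixes a b t P :: real
  assumes "0 \<le> a" "a \<le> b" "b \<le> t" "1 \<le> P"
  shows "b powr P \<le> a powr P + P * t powr (P - 1) * (b - a)"
proof (cases "a = 0")
  case True
  have "b powr P = b * b powr (P - 1)"
    using assms by (cases "b = 0") (auto simp: powr_mult_base)
  also have "\<dots> \<le> b * t powr (P - 1)"
    using assms by (intro mult_left_mono powr_mono2) auto
  also have "\<dots> \<le> P * t powr (P - 1) * b"
    using assms mult_right_mono[of 1 P "t powr (P - 1)"] by (simp add: mult.commute mult_left_mono)
  finally show ?thesis using True by simp
next
  case False
  show ?thesis
  proof (cases "a = b")
    case False
    with \<open>a \<noteq> 0\<close> assms have "0 < a" "a < b" by auto
    have "\<exists>z. a < z \<and> z < b \<and> b powr P - a powr P = (b - a) * (P * z powr (P - 1))"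
      by (rule MVT2[OF \<open>a < b\<close>]) (use \<open>0 < a\<close> in \<open>auto intro!: has_real_derivative_powr\<close>)
    then obtain z where z: "a < z" "z < b" "b powr P - a powr P = (b - a) * (P * z powr (P - 1))"
      by blast
    have "z powr (P - 1) \<le> t powr (P - 1)"
      using z \<open>0 < a\<close> assms by (intro powr_mono2) auto
    then have "(b - a) * (P * z powr (P - 1)) \<le> (b - a) * (P * t powr (P - 1))"
      using assms by (intro mult_left_mono) auto
    then show ?thesis using z by (simp add: algebra_simps)
  qed simp
qed

lemma exists_multiplicity_between:
  fixes P \<delta> \<rho> s :: real
  assumes "1 \<le> P" "0 < \<delta>" "4 * \<delta> < \<rho>" "0 \<le> s" "s < 2 * \<delta>"
  shows "\<exists>m::nat. real m * s powr P < \<rho> powr P \<and> \<rho> powr P / 2 powr (P + 1) \<le> real m * \<delta> powr P"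
proof -
  define z where "z = (\<rho> / (2 * \<delta>)) powr P"
  have "2 < \<rho> / (2 * \<delta>)" using assms by (simp add: field_simps)
  moreover have "\<rho> / (2 * \<delta>) \<le> z"
    unfolding z_def using powr_mono[of 1 P "\<rho> / (2 * \<delta>)"] calculation assms by simp
  ultimately have "2 < z" by linarith
  define m where "m = nat \<lfloor>z\<rfloor>"
  have m: "real m \<le> z" "z / 2 \<le> real m" "1 \<le> real m"
    unfolding m_def using \<open>2 < z\<close> by linarith+
  have z_eq: "z * (2 powr P * \<delta> powr P) = \<rho> powr P"
    unfolding z_def using assms by (simp add: powr_divide powr_mult)
  have "real m * s powr P < real m * (2 powr P * \<delta> powr P)"
    using m assms powr_less_mono2[of P s "2 * \<delta>"] by (simp add: powr_mult)
  also have "\<dots> \<le> \<rho> powr P"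
    using m z_eq by (metis mult_right_mono powr_ge_zero zero_le_mult_iff)
  finally have "real m * s powr P < \<rho> powr P" .
  have "\<rho> powr P / 2 powr (P + 1) = (z / 2) * \<delta> powr P"
    using z_eq by (simp add: powr_add field_simps)
  also have "\<dots> \<le> real m * \<delta> powr P"
    using m by (intro mult_right_mono) auto
  finally show ?thesis using \<open>real m * s powr P < \<rho> powr P\<close> by blast
qed

lemma sum_mset_image_filter_mset:
  "(\<Sum>x\<in>#image_mset g (filter_mset P M). h x) = (\<Sum>z\<in>#M. if P z then h (g z) else 0)"
  by (induction M) auto

lemma sum_mset_nonneg:
  fixes f :: "'b \<Rightarrow> real"
  shows "(\<And>x. x \<in># M \<Longrightarrow> 0 \<le> f x) \<Longrightarrow> 0 \<le> (\<Sum>x\<in>#M. f x)"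
  by (induction M) auto

lemma member_le_sum_mset:
  fixes f :: "'b \<Rightarrow> real"
  assumes "z \<in># M" "\<And>x. x \<in># M \<Longrightarrow> 0 \<le> f x"
  shows "f z \<le> (\<Sum>x\<in>#M. f x)"
proof -
  obtain M' where M: "M = add_mset z M'"
    using assms(1) by (metis multi_member_split)
  have "0 \<le> (\<Sum>x\<in>#M'. f x)"
    using assms(2) unfolding M by (intro sum_mset_nonneg) auto
  then show ?thesis unfolding M by simp
qed

section \<open>Distance to \<open>A\<close>\<close>

lemma ext_metric_zero: "ext_metric d \<Longrightarrow> d x x = 0"
  unfolding ext_metric_def by blast

lemma ext_metric_sym: "ext_metric d \<Longrightarrow> d x y = d y x"
  unfolding ext_metric_def by blast

lemma ext_metric_triangle: "ext_metric d \<Longrightarrow> d x z \<le> d x y + d y z"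
  unfolding ext_metric_def by blast

lemma setdist_e_le: "x \<in> A \<Longrightarrow> setdist_e d y A \<le> d y x"
  unfolding setdist_e_def by (rule INF_lower)

lemma setdist_e_triangle:
  assumes "ext_metric d"
  shows "setdist_e d y A \<le> setdist_e d x A + d x y"
proof (cases "d x y = \<infinity>")
  case False
  have "setdist_e d y A - d x y \<le> d x a" if "a \<in> A" for a
  proof -
    have "setdist_e d y A \<le> d y x + d x a"
      using setdist_e_le[OF that] ext_metric_triangle[OF assms] by (rule order.trans)
    then have "setdist_e d y A \<le> d x y + d x a"
      by (simp only: ext_metric_sym[OF assms, of y x])
    then show ?thesis using False by (simp add: ennreal_minus_le_iff)
  qed
  then have "setdist_e d y A - d x y \<le> setdist_e d x A"
    unfolding setdist_e_def by (rule INF_greatest)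
  then show ?thesis using False by (simp add: ennreal_minus_le_iff add.commute)
qed simp

lemma exists_point_near_nonisolated:
  assumes "ext_metric d" "closed_e d A" "\<not> isolated_set d A" "0 < \<epsilon>"
  obtains x \<delta> where "x \<notin> A" "setdist_e d x A = ennreal \<delta>" "0 < \<delta>" "\<delta> < \<epsilon>"
proof -
  have "A \<subseteq> thickening d A (ennreal \<epsilon>)"
  proof
    fix a assume "a \<in> A"
    then have "setdist_e d a A \<le> 0"
      using setdist_e_le[of a A d a] ext_metric_zero[OF assms(1)] by simp
    then show "a \<in> thickening d A (ennreal \<epsilon>)"
      using assms(4) unfolding thickening_def by simp
  qed
  moreover have "0 < ennreal \<epsilon>"
    using assms(4) by simp
  then have "thickening d A (ennreal \<epsilon>) \<noteq> A"
    using assms(3) unfolding isolated_set_def by blast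
  ultimately obtain x where x: "x \<notin> A" "setdist_e d x A < ennreal \<epsilon>"
    unfolding thickening_def by blast
  moreover have "0 < setdist_e d x A"
    using assms(2) x(1) not_gr_zero unfolding closed_e_def by blast
  ultimately obtain \<delta> where "setdist_e d x A = ennreal \<delta>" "0 < \<delta>" "\<delta> < \<epsilon>"
    by (cases "setdist_e d x A") (auto simp: ennreal_less_iff)
  with x(1) show ?thesis by (rule that)
qed

definition truncated_setdist :: "('a \<Rightarrow> 'a \<Rightarrow> ennreal) \<Rightarrow> 'a set \<Rightarrow> real \<Rightarrow> 'a \<Rightarrow> real" where
  "truncated_setdist d A t y = enn2real (min (setdist_e d y A) (ennreal t))"

lemma truncated_setdist_nonneg [simp]: "0 \<le> truncated_setdist d A t y"
  unfolding truncated_setdist_def by simp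

lemma ennreal_truncated_setdist:
  "0 \<le> t \<Longrightarrow> ennreal (truncated_setdist d A t y) = min (setdist_e d y A) (ennreal t)"
  unfolding truncated_setdist_def by (auto simp: min_def ennreal_enn2real_if top_unique)

lemma truncated_setdist_le_iff:
  "0 \<le> t \<Longrightarrow> 0 \<le> r \<Longrightarrow>
    truncated_setdist d A t y \<le> r \<longleftrightarrow> min (setdist_e d y A) (ennreal t) \<le> ennreal r"
  by (metis ennreal_le_iff ennreal_truncated_setdist)

lemma truncated_setdist_le: "0 \<le> t \<Longrightarrow> truncated_setdist d A t y \<le> t"
  by (simp add: truncated_setdist_le_iff)

lemma truncated_setdist_eq:
  "setdist_e d y A = ennreal \<delta> \<Longrightarrow> 0 \<le> \<delta> \<Longrightarrow> \<delta> \<le> t \<Longrightarrow> truncated_setdist d A t y = \<delta>"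
  unfolding truncated_setdist_def by (simp add: min_def)

lemma truncated_setdist_mono:
  "0 \<le> s \<Longrightarrow> s \<le> t \<Longrightarrow> truncated_setdist d A s y \<le> truncated_setdist d A t y"
  by (simp add: truncated_setdist_le_iff ennreal_truncated_setdist min.coboundedI2 min.mono)

lemma truncated_setdist_Lipschitz:
  assumes "ext_metric d" "0 \<le> t" "d x y \<noteq> \<infinity>"
  shows "truncated_setdist d A t y \<le> truncated_setdist d A t x + enn2real (d x y)"
proof -
  have "min (setdist_e d y A) (ennreal t) \<le> min (setdist_e d x A) (ennreal t) + d x y"
    using setdist_e_triangle[OF assms(1), of y A x] by (auto simp: min_def add_increasing2)
  then show ?thesis
    using assms(2,3) by (simp add: truncated_setdist_le_iff ennreal_truncated_setdist
        ennreal_enn2real_if)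
qed

lemma truncated_setdist_le_dist:
  assumes "ext_metric d" "0 \<le> t" "x \<in> A" "d x y \<noteq> \<infinity>"
  shows "truncated_setdist d A t y \<le> enn2real (d x y)"
proof -
  have "min (setdist_e d y A) (ennreal t) \<le> d x y"
    using setdist_e_le[OF assms(3), of d y] ext_metric_sym[OF assms(1), of y x]
    by (simp add: min.coboundedI1)
  then show ?thesis
    using assms(2,4) by (simp add: truncated_setdist_le_iff ennreal_enn2real_if)
qed

lemma truncated_setdist_powr_Lipschitz:
  assumes "ext_metric d" "0 \<le> t" "1 \<le> P" "d x y \<noteq> \<infinity>"
  shows "truncated_setdist d A t y powr P
    \<le> truncated_setdist d A t x powr P + P * t powr (P - 1) * enn2real (d x y)"
proof -
  let ?a = "truncated_setdist d A t x" and ?e = "enn2real (d x y)"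
  have "truncated_setdist d A t y powr P \<le> min (?a + ?e) t powr P"
    using truncated_setdist_Lipschitz[OF assms(1,2,4)] truncated_setdist_le[OF assms(2)] assms(3)
    by (intro powr_mono2) auto
  also have "\<dots> \<le> ?a powr P + P * t powr (P - 1) * (min (?a + ?e) t - ?a)"
    using truncated_setdist_le[OF assms(2)] assms(3) by (intro powr_increment_le) auto
  also have "\<dots> \<le> ?a powr P + P * t powr (P - 1) * ?e"
    using assms(3) by (intro add_left_mono mult_left_mono) auto
  finally show ?thesis .
qed

section \<open>Matchings\<close>

lemma matchingD:
  assumes "matching A \<gamma> \<gamma>' M"
  shows "\<gamma> = image_mset fst (filter_mset (\<lambda>z. fst z \<notin> A) M)"
    and "\<gamma>' = image_mset snd (filter_mset (\<lambda>z. snd z \<notin> A) M)"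
    and "z \<in># M \<Longrightarrow> fst z \<in> A \<Longrightarrow> snd z \<notin> A"
  using assms unfolding matching_def case_prod_beta' by auto

lemma sum_mset_matching_unmatched_left:
  "matching A \<gamma> \<gamma>' M \<Longrightarrow> (\<Sum>z\<in>#M. if fst z \<notin> A then c else 0) = c * real (size \<gamma>)"
  using matchingD(1)[of A \<gamma> \<gamma>' M] sum_mset_image_filter_mset[of "\<lambda>_. c" fst "\<lambda>z. fst z \<notin> A" M]
  by (simp add: mult.commute)

lemma sum_mset_le_matching:
  fixes h :: "'a \<Rightarrow> real" and b :: "'a \<times> 'a \<Rightarrow> real"
  assumes "matching A \<gamma> \<gamma>' M" and "\<And>y. 0 \<le> h y"
    and "\<And>x y. (x, y) \<in># M \<Longrightarrow> x \<notin> A \<Longrightarrow> h y \<le> h x + b (x, y)"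
    and "\<And>x y. (x, y) \<in># M \<Longrightarrow> x \<in> A \<Longrightarrow> h y \<le> b (x, y)"
  shows "(\<Sum>y\<in>#\<gamma>'. h y) \<le> (\<Sum>x\<in>#\<gamma>. h x) + (\<Sum>z\<in>#M. b z)"
proof -
  have "(\<Sum>y\<in>#\<gamma>'. h y) = (\<Sum>z\<in>#M. if snd z \<notin> A then h (snd z) else 0)"
    by (subst matchingD(2)[OF assms(1)]) (rule sum_mset_image_filter_mset)
  also have "\<dots> \<le> (\<Sum>z\<in>#M. (if fst z \<notin> A then h (fst z) else 0) + b z)"
  proof (rule sum_mset_mono)
    fix z assume z: "z \<in># M"
    obtain x y where xy: "z = (x, y)" by fastforce
    show "(if snd z \<notin> A then h (snd z) else 0) \<le> (if fst z \<notin> A then h (fst z) else 0) + b z"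
    proof (cases "x \<in> A")
      case True
      then show ?thesis
        using z assms(4)[of x y] matchingD(3)[OF assms(1) z] unfolding xy by simp
    next
      case False
      then show ?thesis
        using z assms(2)[of y] assms(3)[of x y] unfolding xy by auto
    qed
  qed
  also have "\<dots> = (\<Sum>x\<in>#\<gamma>. h x) + (\<Sum>z\<in>#M. b z)"
    using matchingD(1)[OF assms(1)] by (simp add: sum_mset.distrib sum_mset_image_filter_mset)
  finally show ?thesis .
qed

lemma match_cost_infinity_lessD:
  assumes "match_cost d \<infinity> M < ennreal \<rho>" "z \<in># M"
  shows "d (fst z) (snd z) \<noteq> \<infinity>" and "enn2real (d (fst z) (snd z)) < \<rho>"
proof -
  have "d (fst z) (snd z) < ennreal \<rho>"
    using assms unfolding match_cost_def by (auto simp: case_prod_beta' dest: SUP_lessD)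
  moreover from this have "d (fst z) (snd z) < top"
    using ennreal_less_top by (rule less_trans)
  ultimately show "d (fst z) (snd z) \<noteq> \<infinity>" and "enn2real (d (fst z) (snd z)) < \<rho>"
    by auto
qed

lemma match_cost_ennreal_lessD:
  fixes P \<rho> :: real
  assumes "1 \<le> P" "match_cost d (ennreal P) M < ennreal \<rho>"
  shows "\<And>z. z \<in># M \<Longrightarrow> d (fst z) (snd z) \<noteq> \<infinity>"
    and "(\<Sum>z\<in>#M. enn2real (d (fst z) (snd z)) powr P) < \<rho> powr P"
    and "0 < \<rho>"
    and "\<And>z. z \<in># M \<Longrightarrow> enn2real (d (fst z) (snd z)) < \<rho>"
proof -
  let ?S = "\<Sum>z\<in>#M. enn2real (d (fst z) (snd z)) powr P"
  have finite_cost: "\<not> (\<exists>(x, y)\<in>#M. d x y = \<infinity>)"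
    using assms unfolding match_cost_def by (auto split: if_splits)
  then show "\<And>z. z \<in># M \<Longrightarrow> d (fst z) (snd z) \<noteq> \<infinity>"
    by auto
  have "ennreal (?S powr (1 / P)) < ennreal \<rho>"
    using assms finite_cost unfolding match_cost_def by (simp add: case_prod_beta')
  then have "?S powr (1 / P) < \<rho>"
    by (simp add: ennreal_less_iff)
  then have "(?S powr (1 / P)) powr P < \<rho> powr P"
    using assms(1) by (intro powr_less_mono2) auto
  moreover have "0 \<le> ?S"
    by (intro sum_mset_nonneg) simp
  ultimately show S: "?S < \<rho> powr P"
    using assms(1) by (simp add: powr_powr)
  have "0 < ennreal \<rho>"
    using assms(2) by (rule le_less_trans[OF zero_le])
  then show "0 < \<rho>"
    by simp
  fix z assume "z \<in># M"
  then have "enn2real (d (fst z) (snd z)) powr P \<le> ?S"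
    by (intro member_le_sum_mset) auto
  then have "enn2real (d (fst z) (snd z)) powr P < \<rho> powr P"
    using S by linarith
  then show "enn2real (d (fst z) (snd z)) < \<rho>"
    using \<open>0 < \<rho>\<close> assms(1) powr_mono2[of P \<rho> "enn2real (d (fst z) (snd z))"] by force
qed

lemma matching_add_replicate_mset:
  assumes "\<alpha> \<in> diagrams A" "a \<in> A" "x \<notin> A"
  shows "matching A \<alpha> (\<alpha> + replicate_mset m x) (image_mset (\<lambda>y. (y, y)) \<alpha> + replicate_mset m (a, x))"
proof -
  have \<alpha>_off_A: "y \<notin> A" if "y \<in># \<alpha>" for y
    using assms(1) that unfolding diagrams_def by auto
  then have "filter_mset (\<lambda>(u, v). u \<notin> A) (image_mset (\<lambda>y. (y, y)) \<alpha>) = image_mset (\<lambda>y. (y, y)) \<alpha>"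
    and "filter_mset (\<lambda>(u, v). v \<notin> A) (image_mset (\<lambda>y. (y, y)) \<alpha>) = image_mset (\<lambda>y. (y, y)) \<alpha>"
    by (induction \<alpha>) auto
  moreover have "filter_mset (\<lambda>(u, v). u \<notin> A) (replicate_mset m (a, x)) = {#}"
    and "filter_mset (\<lambda>(u, v). v \<notin> A) (replicate_mset m (a, x)) = replicate_mset m (a, x)"
    using assms(2,3) by (induction m) auto
  ultimately show ?thesis
    using assms(2,3) \<alpha>_off_A unfolding matching_def by (auto simp: image_mset.compositionality o_def)
qed

lemma diagrams_add_replicate_mset: "\<alpha> \<in> diagrams A \<Longrightarrow> x \<notin> A \<Longrightarrow> \<alpha> + replicate_mset m x \<in> diagrams A"
  by (auto simp: diagrams_def)

lemma wasserstein_infinity_add_replicate_mset_le: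
  assumes "ext_metric d" "\<alpha> \<in> diagrams A" "a \<in> A" "x \<notin> A"
  shows "wasserstein d A \<infinity> \<alpha> (\<alpha> + replicate_mset m x) \<le> d a x"
proof -
  let ?M = "image_mset (\<lambda>y. (y, y)) \<alpha> + replicate_mset m (a, x)"
  have "wasserstein d A \<infinity> \<alpha> (\<alpha> + replicate_mset m x) \<le> match_cost d \<infinity> ?M"
    unfolding wasserstein_def using matching_add_replicate_mset[OF assms(2-4)] by (intro INF_lower) simp
  also have "\<dots> \<le> d a x"
    using ext_metric_zero[OF assms(1)] unfolding match_cost_def by (auto intro!: SUP_least)
  finally show ?thesis .
qed

lemma wasserstein_ennreal_add_replicate_mset_less:
  fixes P s \<rho> :: real
  assumes "ext_metric d" "\<alpha> \<in> diagrams A" "a \<in> A" "x \<notin> A" "0 < P" "0 < \<rho>"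
    and "d a x = ennreal s" "0 \<le> s" "real m * s powr P < \<rho> powr P"
  shows "wasserstein d A (ennreal P) \<alpha> (\<alpha> + replicate_mset m x) < ennreal \<rho>"
proof -
  let ?M = "image_mset (\<lambda>y. (y, y)) \<alpha> + replicate_mset m (a, x)"
  have "wasserstein d A (ennreal P) \<alpha> (\<alpha> + replicate_mset m x) \<le> match_cost d (ennreal P) ?M"
    unfolding wasserstein_def using matching_add_replicate_mset[OF assms(2-4)] by (intro INF_lower) simp
  also have "\<dots> = ennreal ((real m * s powr P) powr (1 / P))"
  proof -
    have "\<not> (\<exists>(u, v)\<in>#?M. d u v = \<infinity>)"
      using ext_metric_zero[OF assms(1)] assms(7) by auto
    moreover have "(\<Sum>(u, v)\<in>#?M. enn2real (d u v) powr P) = real m * s powr P"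
      using ext_metric_zero[OF assms(1)] assms(7,8) by (simp add: image_mset.compositionality o_def)
    ultimately show ?thesis
      using assms(5) unfolding match_cost_def by simp
  qed
  also have "\<dots> < ennreal \<rho>"
  proof -
    have "(real m * s powr P) powr (1 / P) < (\<rho> powr P) powr (1 / P)"
      using assms(5,8,9) by (intro powr_less_mono2) auto
    then show ?thesis
      using assms(5,6) by (simp add: powr_powr ennreal_less_iff)
  qed
  finally show ?thesis .
qed

section \<open>The Wasserstein topology\<close>

lemma compactin_subset_incseq_cover:
  assumes "compactin X K" "\<And>n. openin X (U n)" "incseq U" "K \<subseteq> (\<Union>n. U n)"
  obtains n where "K \<subseteq> U n"
proof -
  obtain F where F: "finite F" "F \<subseteq> range U" "K \<subseteq> \<Union>F"
    using assms(1,2,4) unfolding compactin_def by (metis (no_types, lifting) imageE)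
  then obtain S where S: "finite S" "F = U ` S"
    by (meson finite_subset_image)
  then obtain n where "\<forall>k\<in>S. k \<le> n"
    using finite_nat_set_iff_bounded_le by blast
  then have "K \<subseteq> U n"
    using F(3) S(2) assms(3) by (auto dest: incseqD)
  then show ?thesis by (rule that)
qed

lemma openin_Wp_topology:
  "openin (Wp_topology d A p) U \<longleftrightarrow> emetric_open (diagrams A) (wasserstein d A p) U"
  by (simp add: Wp_topology_def openin_emetric_topology)

lemma topspace_Wp_topology: "topspace (Wp_topology d A p) = diagrams A"
proof -
  have "openin (Wp_topology d A p) (diagrams A)"
    unfolding openin_Wp_topology emetric_open_def by (auto intro: exI[of _ 1])
  moreover have "U \<subseteq> diagrams A" if "openin (Wp_topology d A p) U" for U
    using that unfolding openin_Wp_topology emetric_open_def by blast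
  ultimately show ?thesis
    unfolding topspace_def by blast
qed

lemma openin_Wp_topology_ball:
  assumes "openin (Wp_topology d A p) U" "\<alpha> \<in> U"
  obtains \<rho> :: real where "0 < \<rho>"
    and "\<And>\<beta>. \<beta> \<in> diagrams A \<Longrightarrow> wasserstein d A p \<alpha> \<beta> < ennreal \<rho> \<Longrightarrow> \<beta> \<in> U"
proof -
  obtain r where r: "0 < r" "\<And>\<beta>. \<beta> \<in> diagrams A \<Longrightarrow> wasserstein d A p \<alpha> \<beta> < r \<Longrightarrow> \<beta> \<in> U"
    using assms unfolding openin_Wp_topology emetric_open_def by blast
  have "min r 1 < top"
    using min.cobounded2 ennreal_one_less_top by (rule le_less_trans)
  moreover have "0 < min r 1"
    using r(1) by simp
  ultimately obtain \<rho> where \<rho>: "min r 1 = ennreal \<rho>" "0 < \<rho>"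
    by (cases "min r 1") auto
  show ?thesis
  proof (rule that)
    fix \<beta> assume "\<beta> \<in> diagrams A" "wasserstein d A p \<alpha> \<beta> < ennreal \<rho>"
    moreover have "ennreal \<rho> \<le> r"
      using \<rho>(1) min.cobounded1[of r 1] by simp
    ultimately show "\<beta> \<in> U"
      using r(2) less_le_trans by blast
  qed (rule \<rho>(2))
qed

lemma openin_Wp_topology_sublevel:
  fixes f :: "'a multiset \<Rightarrow> real"
  assumes "\<And>\<gamma>. \<gamma> \<in> diagrams A \<Longrightarrow> \<exists>C\<ge>0. \<exists>r>0. \<forall>\<gamma>' M \<rho>.
      matching A \<gamma> \<gamma>' M \<longrightarrow> match_cost d p M < ennreal \<rho> \<longrightarrow> \<rho> \<le> r \<longrightarrow> f \<gamma>' \<le> f \<gamma> + C * \<rho>"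
  shows "openin (Wp_topology d A p) {\<gamma> \<in> diagrams A. f \<gamma> < c}"
  unfolding openin_Wp_topology emetric_open_def
proof (intro conjI ballI)
  fix \<gamma> assume \<gamma>: "\<gamma> \<in> {\<gamma> \<in> diagrams A. f \<gamma> < c}"
  then obtain C r where C: "0 \<le> C" "0 < r" and estimate: "\<And>\<gamma>' M \<rho>.
      matching A \<gamma> \<gamma>' M \<Longrightarrow> match_cost d p M < ennreal \<rho> \<Longrightarrow> \<rho> \<le> r \<Longrightarrow> f \<gamma>' \<le> f \<gamma> + C * \<rho>"
    using assms by blast
  define \<rho> where "\<rho> = min r ((c - f \<gamma>) / (C + 1))"
  have "0 < \<rho>"
    using \<gamma> C unfolding \<rho>_def by auto
  have "C * \<rho> \<le> C * ((c - f \<gamma>) / (C + 1))"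
    using C unfolding \<rho>_def by (intro mult_left_mono) auto
  also have "\<dots> < c - f \<gamma>"
    using \<gamma> C by (simp add: field_simps)
  finally have "f \<gamma> + C * \<rho> < c" by simp
  show "\<exists>r>0. {\<gamma>' \<in> diagrams A. wasserstein d A p \<gamma> \<gamma>' < r} \<subseteq> {\<gamma> \<in> diagrams A. f \<gamma> < c}"
  proof (intro exI[of _ "ennreal \<rho>"] conjI subsetI)
    show "0 < ennreal \<rho>" using \<open>0 < \<rho>\<close> by simp
    fix \<gamma>' assume \<gamma>': "\<gamma>' \<in> {\<gamma>' \<in> diagrams A. wasserstein d A p \<gamma> \<gamma>' < ennreal \<rho>}"
    then obtain M where "matching A \<gamma> \<gamma>' M" "match_cost d p M < ennreal \<rho>"
      unfolding wasserstein_def by (auto simp: INF_less_iff)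
    then have "f \<gamma>' \<le> f \<gamma> + C * \<rho>"
      by (rule estimate) (simp add: \<rho>_def)
    with \<gamma>' \<open>f \<gamma> + C * \<rho> < c\<close> show "\<gamma>' \<in> {\<gamma> \<in> diagrams A. f \<gamma> < c}"
      by simp
  qed
qed auto

section \<open>Upper semicontinuous diagram functionals\<close>

definition truncated_power_sum :: "('a \<Rightarrow> 'a \<Rightarrow> ennreal) \<Rightarrow> 'a set \<Rightarrow> real \<Rightarrow> real \<Rightarrow> 'a multiset \<Rightarrow> real"
  where "truncated_power_sum d A P t \<gamma> = (\<Sum>y\<in>#\<gamma>. truncated_setdist d A t y powr P)"

text \<open>Points within \<open>t/2\<close> of \<open>A\<close> do not contribute, so the arbitrarily many points that a
  \<open>W\<^sub>\<infinity>\<close>-small perturbation may create near \<open>A\<close> do not increase the sum.\<close>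
definition truncated_excess_sum :: "('a \<Rightarrow> 'a \<Rightarrow> ennreal) \<Rightarrow> 'a set \<Rightarrow> real \<Rightarrow> 'a multiset \<Rightarrow> real"
  where "truncated_excess_sum d A t \<gamma> = (\<Sum>y\<in>#\<gamma>. max 0 (truncated_setdist d A t y - t / 2))"

lemma truncated_power_sum_matching_le:
  fixes P t \<rho> :: real
  assumes "ext_metric d" "1 \<le> P" "0 \<le> t"
    and "matching A \<gamma> \<gamma>' M" "match_cost d (ennreal P) M < ennreal \<rho>" "\<rho> \<le> 1"
  shows "truncated_power_sum d A P t \<gamma>'
    \<le> truncated_power_sum d A P t \<gamma> + (P * t powr (P - 1) * real (size \<gamma>) + 1) * \<rho>"
proof -
  let ?e = "\<lambda>z. enn2real (d (fst z) (snd z))"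
  define L where "L = P * t powr (P - 1)"
  have "0 \<le> L"
    using assms(2) unfolding L_def by simp
  note cost = match_cost_ennreal_lessD[OF assms(2,5)]
  have "truncated_power_sum d A P t \<gamma>'
      \<le> truncated_power_sum d A P t \<gamma> + (\<Sum>z\<in>#M. if fst z \<in> A then ?e z powr P else L * ?e z)"
    unfolding truncated_power_sum_def
  proof (rule sum_mset_le_matching[OF assms(4)])
    fix x y assume xy: "(x, y) \<in># M"
    then have "d x y \<noteq> \<infinity>"
      using cost(1) by fastforce
    show "truncated_setdist d A t y powr P
        \<le> truncated_setdist d A t x powr P + (if fst (x, y) \<in> A then ?e (x, y) powr P else L * ?e (x, y))"
      if "x \<notin> A"
      using truncated_setdist_powr_Lipschitz[OF assms(1,3,2) \<open>d x y \<noteq> \<infinity>\<close>] that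
      unfolding L_def by simp
    show "truncated_setdist d A t y powr P \<le> (if fst (x, y) \<in> A then ?e (x, y) powr P else L * ?e (x, y))"
      if "x \<in> A"
      using truncated_setdist_le_dist[OF assms(1,3) that \<open>d x y \<noteq> \<infinity>\<close>] that assms(2)
      by (simp add: powr_mono2)
  qed simp
  also have "(\<Sum>z\<in>#M. if fst z \<in> A then ?e z powr P else L * ?e z)
      \<le> (\<Sum>z\<in>#M. (if fst z \<notin> A then L * \<rho> else 0) + ?e z powr P)"
  proof (rule sum_mset_mono)
    fix z assume "z \<in># M"
    then have "L * ?e z \<le> L * \<rho>"
      using cost(4) \<open>0 \<le> L\<close> by (intro mult_left_mono) (auto intro: less_imp_le)
    then show "(if fst z \<in> A then ?e z powr P else L * ?e z) \<le> (if fst z \<notin> A then L * \<rho> else 0) + ?e z powr P"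
      by (simp add: add_increasing2)
  qed
  also have "\<dots> = L * \<rho> * real (size \<gamma>) + (\<Sum>z\<in>#M. ?e z powr P)"
    by (simp add: sum_mset.distrib sum_mset_matching_unmatched_left[OF assms(4)])
  also have "\<dots> \<le> L * \<rho> * real (size \<gamma>) + \<rho>"
    using cost(2,3) assms(2,6) powr_mono'[of 1 P \<rho>] by simp
  finally show ?thesis
    unfolding L_def by (simp add: algebra_simps)
qed

lemma truncated_excess_sum_matching_le:
  assumes "ext_metric d" "matching A \<gamma> \<gamma>' M" "match_cost d \<infinity> M < ennreal \<rho>" "\<rho> \<le> t / 2"
  shows "truncated_excess_sum d A t \<gamma>' \<le> truncated_excess_sum d A t \<gamma> + real (size \<gamma>) * \<rho>"
proof -
  let ?e = "\<lambda>z. enn2real (d (fst z) (snd z))"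
  note cost = match_cost_infinity_lessD[OF assms(3)]
  have "0 < ennreal \<rho>"
    using assms(3) by (rule le_less_trans[OF zero_le])
  then have "0 \<le> t"
    using assms(4) by simp
  have "truncated_excess_sum d A t \<gamma>'
      \<le> truncated_excess_sum d A t \<gamma> + (\<Sum>z\<in>#M. if fst z \<in> A then 0 else ?e z)"
    unfolding truncated_excess_sum_def
  proof (rule sum_mset_le_matching[OF assms(2)])
    fix x y assume xy: "(x, y) \<in># M"
    then have "d x y \<noteq> \<infinity>" "?e (x, y) < \<rho>"
      using cost by fastforce+
    show "max 0 (truncated_setdist d A t y - t / 2)
        \<le> max 0 (truncated_setdist d A t x - t / 2) + (if fst (x, y) \<in> A then 0 else ?e (x, y))"
      if "x \<notin> A"
      using truncated_setdist_Lipschitz[OF assms(1) \<open>0 \<le> t\<close> \<open>d x y \<noteq> \<infinity>\<close>, of A] that by simp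
    show "max 0 (truncated_setdist d A t y - t / 2) \<le> (if fst (x, y) \<in> A then 0 else ?e (x, y))"
      if "x \<in> A"
      using truncated_setdist_le_dist[OF assms(1) \<open>0 \<le> t\<close> that \<open>d x y \<noteq> \<infinity>\<close>]
        \<open>?e (x, y) < \<rho>\<close> assms(4) that by simp
  qed simp
  also have "(\<Sum>z\<in>#M. if fst z \<in> A then 0 else ?e z) \<le> (\<Sum>z\<in>#M. if fst z \<notin> A then \<rho> else 0)"
    using cost(2) by (intro sum_mset_mono) (auto intro: less_imp_le)
  also have "\<dots> = real (size \<gamma>) * \<rho>"
    by (simp add: sum_mset_matching_unmatched_left[OF assms(2)] mult.commute)
  finally show ?thesis by simp
qed

lemma openin_truncated_power_sum:
  assumes "ext_metric d" "1 \<le> P" "0 \<le> t"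
  shows "openin (Wp_topology d A (ennreal P)) {\<gamma> \<in> diagrams A. truncated_power_sum d A P t \<gamma> < c}"
proof (rule openin_Wp_topology_sublevel)
  fix \<gamma>
  show "\<exists>C\<ge>0. \<exists>r>0. \<forall>\<gamma>' M \<rho>. matching A \<gamma> \<gamma>' M \<longrightarrow> match_cost d (ennreal P) M < ennreal \<rho> \<longrightarrow>
      \<rho> \<le> r \<longrightarrow> truncated_power_sum d A P t \<gamma>' \<le> truncated_power_sum d A P t \<gamma> + C * \<rho>"
  proof (rule exI[of _ "P * t powr (P - 1) * real (size \<gamma>) + 1"], intro exI[of _ 1] conjI allI impI)
    show "0 \<le> P * t powr (P - 1) * real (size \<gamma>) + 1"
      using assms(2) by simp
  qed (use truncated_power_sum_matching_le[OF assms] in auto)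
qed

lemma openin_truncated_excess_sum:
  assumes "ext_metric d" "0 < t"
  shows "openin (Wp_topology d A \<infinity>) {\<gamma> \<in> diagrams A. truncated_excess_sum d A t \<gamma> < c}"
proof (rule openin_Wp_topology_sublevel)
  fix \<gamma>
  show "\<exists>C\<ge>0. \<exists>r>0. \<forall>\<gamma>' M \<rho>. matching A \<gamma> \<gamma>' M \<longrightarrow> match_cost d \<infinity> M < ennreal \<rho> \<longrightarrow>
      \<rho> \<le> r \<longrightarrow> truncated_excess_sum d A t \<gamma>' \<le> truncated_excess_sum d A t \<gamma> + C * \<rho>"
  proof (rule exI[of _ "real (size \<gamma>)"], intro exI[of _ "t / 2"] conjI allI impI)
    fix \<gamma>' M \<rho> assume "matching A \<gamma> \<gamma>' M" "match_cost d \<infinity> M < ennreal \<rho>" "\<rho> \<le> t / 2"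
    then show "truncated_excess_sum d A t \<gamma>' \<le> truncated_excess_sum d A t \<gamma> + real (size \<gamma>) * \<rho>"
      by (rule truncated_excess_sum_matching_le[OF assms(1)])
  qed (use assms(2) in auto)
qed

lemma truncated_power_sum_mono:
  "0 \<le> s \<Longrightarrow> s \<le> t \<Longrightarrow> 0 \<le> P \<Longrightarrow> truncated_power_sum d A P s \<gamma> \<le> truncated_power_sum d A P t \<gamma>"
  unfolding truncated_power_sum_def by (intro sum_mset_mono powr_mono2 truncated_setdist_mono) auto

lemma truncated_power_sum_le_size:
  assumes "1 \<le> P" "0 \<le> t" "t \<le> 1"
  shows "truncated_power_sum d A P t \<gamma> \<le> real (size \<gamma>) * t"
proof -
  have "truncated_setdist d A t y powr P \<le> t" for y
  proof -
    have "truncated_setdist d A t y powr P \<le> t powr P"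
      using truncated_setdist_le[OF assms(2)] assms(1) by (intro powr_mono2) auto
    also have "\<dots> \<le> t"
      using powr_mono'[of 1 P t] assms by simp
    finally show ?thesis .
  qed
  then have "truncated_power_sum d A P t \<gamma> \<le> (\<Sum>y\<in>#\<gamma>. t)"
    unfolding truncated_power_sum_def by (intro sum_mset_mono)
  then show ?thesis by simp
qed

lemma compactin_Wp_truncated_excess_sum_bounded:
  assumes "ext_metric d" "0 < t" "compactin (Wp_topology d A \<infinity>) K"
  obtains N :: nat where "\<And>\<gamma>. \<gamma> \<in> K \<Longrightarrow> truncated_excess_sum d A t \<gamma> < real N"
proof -
  let ?U = "\<lambda>n::nat. {\<gamma> \<in> diagrams A. truncated_excess_sum d A t \<gamma> < real n}"
  have "openin (Wp_topology d A \<infinity>) (?U n)" for n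
    by (rule openin_truncated_excess_sum[OF assms(1,2)])
  moreover have "incseq ?U"
    by (rule incseq_SucI) auto
  moreover have "K \<subseteq> diagrams A"
    using compactin_subset_topspace[OF assms(3)] by (simp add: topspace_Wp_topology)
  then have "K \<subseteq> (\<Union>n. ?U n)"
    using reals_Archimedean2 by blast
  ultimately obtain n where "K \<subseteq> ?U n"
    by (rule compactin_subset_incseq_cover[OF assms(3)])
  then show ?thesis
    using that by blast
qed

lemma compactin_Wp_truncated_power_sum_small:
  assumes "ext_metric d" "1 \<le> P" "0 < c" "compactin (Wp_topology d A (ennreal P)) K"
  obtains t where "0 < t" "\<And>\<gamma>. \<gamma> \<in> K \<Longrightarrow> truncated_power_sum d A P t \<gamma> < c"
proof -
  let ?U = "\<lambda>n::nat. {\<gamma> \<in> diagrams A. truncated_power_sum d A P (1 / Suc n) \<gamma> < c}"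
  have "openin (Wp_topology d A (ennreal P)) (?U n)" for n
    using openin_truncated_power_sum[OF assms(1,2)] by simp
  moreover have "incseq ?U"
  proof (rule incseq_SucI, safe)
    fix n \<gamma> assume "truncated_power_sum d A P (1 / Suc n) \<gamma> < c"
    moreover have "truncated_power_sum d A P (1 / Suc (Suc n)) \<gamma> \<le> truncated_power_sum d A P (1 / Suc n) \<gamma>"
      using assms(2) by (intro truncated_power_sum_mono divide_left_mono) auto
    ultimately show "truncated_power_sum d A P (1 / Suc (Suc n)) \<gamma> < c"
      by linarith
  qed
  moreover have "K \<subseteq> (\<Union>n. ?U n)"
  proof
    fix \<gamma> assume "\<gamma> \<in> K"
    then have "\<gamma> \<in> diagrams A"
      using compactin_subset_topspace[OF assms(4)] by (auto simp: topspace_Wp_topology)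
    obtain n :: nat where "real (size \<gamma>) / c < real n"
      using reals_Archimedean2 by blast
    then have "real (size \<gamma>) < c * real (Suc n)"
      using assms(3) by (simp add: pos_divide_less_eq algebra_simps)
    then have "real (size \<gamma>) * (1 / Suc n) < c"
      by (simp add: pos_divide_less_eq mult.commute)
    moreover have "truncated_power_sum d A P (1 / Suc n) \<gamma> \<le> real (size \<gamma>) * (1 / Suc n)"
      using assms(2) by (intro truncated_power_sum_le_size) auto
    ultimately have "\<gamma> \<in> ?U n"
      using \<open>\<gamma> \<in> diagrams A\<close> by simp
    then show "\<gamma> \<in> (\<Union>n. ?U n)"
      by blast
  qed
  ultimately obtain n where "K \<subseteq> ?U n"
    by (rule compactin_subset_incseq_cover[OF assms(4)])
  then show ?thesis
    using that[of "1 / Suc n"] by auto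
qed

section \<open>Balls are not relatively compact\<close>

lemma Wp_infinity_ball_excess_sum_unbounded:
  assumes "ext_metric d" "closed_e d A" "\<not> isolated_set d A" "\<alpha> \<in> diagrams A" "0 < \<rho>"
  obtains \<delta> where "0 < \<delta>"
    and "\<And>N. \<exists>\<beta>\<in>diagrams A. wasserstein d A \<infinity> \<alpha> \<beta> < ennreal \<rho> \<and> N \<le> truncated_excess_sum d A \<delta> \<beta>"
proof -
  obtain x \<delta> where x: "x \<notin> A" "setdist_e d x A = ennreal \<delta>" "0 < \<delta>" "\<delta> < \<rho>"
    using exists_point_near_nonisolated[OF assms(1-3,5)] .
  then have "setdist_e d x A < ennreal \<rho>"
    by (simp add: ennreal_less_iff)
  then obtain a where "a \<in> A" "d x a < ennreal \<rho>"
    unfolding setdist_e_def by (auto simp: INF_less_iff)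
  then have "d a x < ennreal \<rho>"
    by (simp add: ext_metric_sym[OF assms(1), of a x])
  have "truncated_setdist d A \<delta> x = \<delta>"
    using x by (intro truncated_setdist_eq) auto
  show ?thesis
  proof (rule that[OF x(3)])
    fix N :: real
    define m where "m = nat \<lceil>2 * N / \<delta>\<rceil>"
    define \<beta> where "\<beta> = \<alpha> + replicate_mset m x"
    have "wasserstein d A \<infinity> \<alpha> \<beta> < ennreal \<rho>"
      unfolding \<beta>_def
      using wasserstein_infinity_add_replicate_mset_le[OF assms(1,4) \<open>a \<in> A\<close> x(1)] \<open>d a x < ennreal \<rho>\<close>
      by (rule le_less_trans)
    moreover have "truncated_excess_sum d A \<delta> \<beta> = truncated_excess_sum d A \<delta> \<alpha> + real m * (\<delta> / 2)"
      unfolding \<beta>_def truncated_excess_sum_def using \<open>truncated_setdist d A \<delta> x = \<delta>\<close> x(3) by simp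
    moreover have "0 \<le> truncated_excess_sum d A \<delta> \<alpha>"
      unfolding truncated_excess_sum_def by (intro sum_mset_nonneg) simp
    moreover have "2 * N / \<delta> \<le> real m"
      unfolding m_def by linarith
    then have "N \<le> real m * (\<delta> / 2)"
      using x(3) by (simp add: field_simps)
    ultimately show "\<exists>\<beta>\<in>diagrams A. wasserstein d A \<infinity> \<alpha> \<beta> < ennreal \<rho> \<and> N \<le> truncated_excess_sum d A \<delta> \<beta>"
      using diagrams_add_replicate_mset[OF assms(4) x(1)] unfolding \<beta>_def by force
  qed
qed

lemma Wp_ennreal_ball_power_sum_large:
  fixes P \<rho> t :: real
  assumes "ext_metric d" "closed_e d A" "\<not> isolated_set d A" "\<alpha> \<in> diagrams A"
    and "1 \<le> P" "0 < \<rho>" "0 < t"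
  shows "\<exists>\<beta>\<in>diagrams A. wasserstein d A (ennreal P) \<alpha> \<beta> < ennreal \<rho>
    \<and> \<rho> powr P / 2 powr (P + 1) \<le> truncated_power_sum d A P t \<beta>"
proof -
  have "0 < min t (\<rho> / 4)"
    using assms(6,7) by simp
  then obtain x \<delta> where x: "x \<notin> A" "setdist_e d x A = ennreal \<delta>" "0 < \<delta>" "\<delta> < min t (\<rho> / 4)"
    using exists_point_near_nonisolated[OF assms(1-3)] by blast
  then have "setdist_e d x A < ennreal (2 * \<delta>)"
    by (simp add: ennreal_less_iff)
  then obtain a where "a \<in> A" "d x a < ennreal (2 * \<delta>)"
    unfolding setdist_e_def by (auto simp: INF_less_iff)
  then obtain s where s: "d a x = ennreal s" "0 \<le> s" "s < 2 * \<delta>"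
    by (cases "d a x") (auto simp: ext_metric_sym[OF assms(1), of a x] ennreal_less_iff)
  have "4 * \<delta> < \<rho>"
    using x(4) by simp
  then obtain m where m: "real m * s powr P < \<rho> powr P" "\<rho> powr P / 2 powr (P + 1) \<le> real m * \<delta> powr P"
    using exists_multiplicity_between[OF assms(5) x(3) _ s(2,3)] by blast
  define \<beta> where "\<beta> = \<alpha> + replicate_mset m x"
  have "wasserstein d A (ennreal P) \<alpha> \<beta> < ennreal \<rho>"
    unfolding \<beta>_def using assms(5,6)
    by (intro wasserstein_ennreal_add_replicate_mset_less[OF assms(1,4) \<open>a \<in> A\<close> x(1) _ _ s(1,2) m(1)]) auto
  moreover have "truncated_setdist d A t x = \<delta>"
    using x by (intro truncated_setdist_eq) auto
  then have "truncated_power_sum d A P t \<beta> = truncated_power_sum d A P t \<alpha> + real m * \<delta> powr P"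
    unfolding \<beta>_def truncated_power_sum_def by simp
  moreover have "0 \<le> truncated_power_sum d A P t \<alpha>"
    unfolding truncated_power_sum_def by (intro sum_mset_nonneg) simp
  ultimately show ?thesis
    using m(2) diagrams_add_replicate_mset[OF assms(4) x(1)] unfolding \<beta>_def by force
qed

lemma Wp_no_compact_neighbourhood:
  assumes "ext_metric d" "closed_e d A" "\<not> isolated_set d A" "1 \<le> p"
    and "openin (Wp_topology d A p) U" "compactin (Wp_topology d A p) K" "\<alpha> \<in> U" "U \<subseteq> K"
  shows False
proof -
  have "\<alpha> \<in> diagrams A"
    using openin_subset[OF assms(5)] assms(7) unfolding topspace_Wp_topology by blast
  obtain \<rho> where "0 < \<rho>"
    and "\<And>\<beta>. \<beta> \<in> diagrams A \<Longrightarrow> wasserstein d A p \<alpha> \<beta> < ennreal \<rho> \<Longrightarrow> \<beta> \<in> U"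
    using openin_Wp_topology_ball[OF assms(5,7)] by metis
  with assms(8) have ball: "\<And>\<beta>. \<beta> \<in> diagrams A \<Longrightarrow> wasserstein d A p \<alpha> \<beta> < ennreal \<rho> \<Longrightarrow> \<beta> \<in> K"
    by blast
  show False
  proof (cases p)
    case (real P)
    with assms(4,6) have "1 \<le> P" and K: "compactin (Wp_topology d A (ennreal P)) K"
      by simp_all
    have "0 < \<rho> powr P / 2 powr (P + 1)"
      using \<open>0 < \<rho>\<close> by simp
    then obtain t where "0 < t" and small: "\<And>\<gamma>. \<gamma> \<in> K \<Longrightarrow> truncated_power_sum d A P t \<gamma> < \<rho> powr P / 2 powr (P + 1)"
      using compactin_Wp_truncated_power_sum_small[OF assms(1) \<open>1 \<le> P\<close> _ K] by blast
    then show False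
      using Wp_ennreal_ball_power_sum_large[OF assms(1-3) \<open>\<alpha> \<in> diagrams A\<close> \<open>1 \<le> P\<close> \<open>0 < \<rho>\<close> \<open>0 < t\<close>]
        ball real by (meson not_le)
  next
    case top
    with assms(6) ball have K: "compactin (Wp_topology d A \<infinity>) K"
      and ball: "\<And>\<beta>. \<beta> \<in> diagrams A \<Longrightarrow> wasserstein d A \<infinity> \<alpha> \<beta> < ennreal \<rho> \<Longrightarrow> \<beta> \<in> K"
      by simp_all
    obtain \<delta> where "0 < \<delta>" and unbounded: "\<And>N. \<exists>\<beta>\<in>diagrams A.
        wasserstein d A \<infinity> \<alpha> \<beta> < ennreal \<rho> \<and> N \<le> truncated_excess_sum d A \<delta> \<beta>"
      using Wp_infinity_ball_excess_sum_unbounded[OF assms(1-3) \<open>\<alpha> \<in> diagrams A\<close> \<open>0 < \<rho>\<close>] by blast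
    obtain N :: nat where "\<And>\<gamma>. \<gamma> \<in> K \<Longrightarrow> truncated_excess_sum d A \<delta> \<gamma> < real N"
      using compactin_Wp_truncated_excess_sum_bounded[OF assms(1) \<open>0 < \<delta>\<close> K] by blast
    then show False
      using unbounded[of "real N"] ball by (meson not_le)
  qed
qed

theorem theorem7p10:
  fixes d :: "'a \<Rightarrow> 'a \<Rightarrow> ennreal" and A :: "'a set" and p :: ennreal
  assumes "ext_metric d"
    and "closed_e d A"
    and "\<not> isolated_set d A"
    and "1 \<le> p"
  shows "(\<forall>\<alpha>\<in>diagrams A. \<not> (\<exists>U K. openin (Wp_topology d A p) U \<and> compactin (Wp_topology d A p) K
                                  \<and> \<alpha> \<in> U \<and> U \<subseteq> K))
    \<and> \<not> locally_compact_space (Wp_topology d A p)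
    \<and> (\<forall>K. compactin (Wp_topology d A p) K \<longrightarrow> (Wp_topology d A p) interior_of K = {})"
proof (intro conjI ballI allI impI)
  note no_nbhd = Wp_no_compact_neighbourhood[OF assms]
  show "\<not> (\<exists>U K. openin (Wp_topology d A p) U \<and> compactin (Wp_topology d A p) K \<and> \<alpha> \<in> U \<and> U \<subseteq> K)"
    for \<alpha>
    using no_nbhd by blast
  have "{#} \<in> topspace (Wp_topology d A p)"
    by (simp add: topspace_Wp_topology diagrams_def)
  then show "\<not> locally_compact_space (Wp_topology d A p)"
    unfolding locally_compact_space_def by (meson no_nbhd)
  show "Wp_topology d A p interior_of K = {}" if "compactin (Wp_topology d A p) K" for K
    using no_nbhd[OF openin_interior_of that _ interior_of_subset] by blast
qed

end
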